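(* Let $(TQ\times\mathbb R^m,\vec\lambda^L,E_L)$ be the $m$-contact Lagrangian system of a regular Lagrangian $L:TQ\times\mathbb R^m\to\mathbb R$, and let $$X=F_i\frac{\partial}{\partial q^i}+G_j\frac{\partial}{\partial \dot q^j}+H_k\frac{\partial}{\partial z^k}$$ be a vector field on $TQ\times\mathbb R^m$ which is an $m$-Cartan symmetry, i.e. $\mathcal L_X\lambda^L_i=df_i$ for some $f_i\in C^\infty(TQ\times\mathbb R^m)$, $i=1,\dots,m$. Then for each $i=1,\dots,m$, the $1$-form $d\big(f_i-H_i+X^v(L)\big)$ vanishes on the Reeb distribution, i.e. $d\big(f_i-H_i+X^v(L)\big)(R_k)=0$ for all $k=1,\dots,m$.
   Context: $Q$ is an $n$-dimensional manifold; $TQ\times\mathbb R^m$ has local coordinates $(q^i,\dot q^i,z^1,\dots,z^m)$. $L$ is regular if $W_{ij}=\partial^2L/\partial\dot q^i\partial\dot q^j$ is invertible, with inverse $(W^{ij})$. Define $\lambda^L_k=dz^k-\frac{\partial L}{\partial\dot q^j}dq^j$ ($k=1,\dots,m$) and the Reeb vector fields $R_k=\frac{\partial}{\partial z^k}-W^{ij}\frac{\partial^2L}{\partial\dot q^i\partial z^k}\frac{\partial}{\partial\dot q^j}$, which span the Reeb distribution $\mathcal R$. For $X$ as in the claim, $X^v:=S(X)=F_i\frac{\partial}{\partial\dot q^i}$, where $S=\frac{\partial}{\partial\dot q^i}\otimes dq^i$ is the vertical endomorphism; thus $X^v(L)=F_i\frac{\partial L}{\partial\dot q^i}$. *)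

theory Defs
  imports "HOL-Analysis.Analysis"
begin

text \<open>Local coordinate model of T Q x R^m over a chart domain V (open in R^n):
  points are triples (q, qdot, z).\<close>

type_synonym ('n, 'm) pt = "(real^'n) \<times> (real^'n) \<times> (real^'m)"

definition pd :: "'a::real_normed_vector \<Rightarrow> ('a \<Rightarrow> 'b::real_normed_vector) \<Rightarrow> 'a \<Rightarrow> 'b" where
  "pd v f = (\<lambda>p. frechet_derivative f (at p) v)"

definition smooth_on :: "'a::real_normed_vector set \<Rightarrow> ('a \<Rightarrow> 'b::real_normed_vector) \<Rightarrow> bool" where
  "smooth_on S f \<longleftrightarrow> (\<forall>vs. \<forall>p\<in>S. (foldr pd vs f) differentiable (at p))"

definition dir_q :: "'n::finite \<Rightarrow> ('n, 'm::finite) pt" where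
  "dir_q i = (axis i 1, 0, 0)"
definition dir_v :: "'n::finite \<Rightarrow> ('n, 'm::finite) pt" where
  "dir_v i = (0, axis i 1, 0)"
definition dir_z :: "'m::finite \<Rightarrow> ('n::finite, 'm) pt" where
  "dir_z k = (0, 0, axis k 1)"

definition dfun :: "('a::real_normed_vector \<Rightarrow> real) \<Rightarrow> 'a \<Rightarrow> 'a \<Rightarrow> real" where
  "dfun f p w = frechet_derivative f (at p) w"

text \<open>Lie derivative of a 1-form alpha along a vector field X on an open subset of a vector space:
  (L_X alpha)(w) = X(alpha(w)) - alpha([X,w]) for constant w, i.e. the coordinate formula.\<close>
definition lie_form :: "('a::real_normed_vector \<Rightarrow> 'a) \<Rightarrow> ('a \<Rightarrow> 'a \<Rightarrow> real) \<Rightarrow> 'a \<Rightarrow> 'a \<Rightarrow> real" where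
  "lie_form X \<alpha> p w = frechet_derivative (\<lambda>x. \<alpha> x w) (at p) (X p) + \<alpha> p (frechet_derivative X (at p) w)"

definition Wmat :: "(('n::finite, 'm::finite) pt \<Rightarrow> real) \<Rightarrow> ('n, 'm) pt \<Rightarrow> real^'n^'n" where
  "Wmat L p = (\<chi> i j. pd (dir_v i) (pd (dir_v j) L) p)"

definition regular_on :: "('n::finite, 'm::finite) pt set \<Rightarrow> (('n, 'm) pt \<Rightarrow> real) \<Rightarrow> bool" where
  "regular_on S L \<longleftrightarrow> (\<forall>p\<in>S. invertible (Wmat L p))"

definition lamL :: "(('n::finite, 'm::finite) pt \<Rightarrow> real) \<Rightarrow> 'm \<Rightarrow> ('n, 'm) pt \<Rightarrow> ('n, 'm) pt \<Rightarrow> real" where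
  "lamL L k p w = (snd (snd w)) $ k - (\<Sum>j\<in>UNIV. pd (dir_v j) L p * (fst w $ j))"

definition reeb :: "(('n::finite, 'm::finite) pt \<Rightarrow> real) \<Rightarrow> 'm \<Rightarrow> ('n, 'm) pt \<Rightarrow> ('n, 'm) pt" where
  "reeb L k p = (0, (\<chi> j. - (\<Sum>i\<in>UNIV. matrix_inv (Wmat L p) $ i $ j * pd (dir_v i) (pd (dir_z k) L) p)), axis k 1)"

definition vert_lift_L :: "(('n::finite, 'm::finite) pt \<Rightarrow> ('n, 'm) pt) \<Rightarrow> (('n, 'm) pt \<Rightarrow> real) \<Rightarrow> ('n, 'm) pt \<Rightarrow> real" where
  "vert_lift_L X L p = (\<Sum>i\<in>UNIV. fst (X p) $ i * pd (dir_v i) L p)"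

end

theory Submission
  imports Defs
begin

text \<open>
  Since R_k has no dq-component, lambda^L_i(R_k) is constant, so the Cartan condition evaluated
  on R_k reads df_i(R_k) = lambda^L_i(dX(R_k)) = dH_i(R_k) - (dL/dqdot^j) dF_j(R_k).
  On the other hand R_k annihilates every d(dL/dqdot^j): by the symmetry of second derivatives
  this is d^2L/dqdot^j dz^k - (d^2L/dqdot^i dz^k) W^il W_lj = 0.
  Hence d(X^v(L))(R_k) = (dL/dqdot^j) dF_j(R_k), and the three terms cancel.
  The symmetry of second derivatives follows by applying the mean value theorem twice to the
  second difference f(p + su + sv) - f(p + su) - f(p + sv) + f(p).
\<close>

lemma smooth_on_pd:
  assumes "smooth_on S f"
  shows "smooth_on S (pd v f)"
  unfolding smooth_on_def
proof (intro allI ballI)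
  fix vs p assume "p \<in> S"
  then have "foldr pd (vs @ [v]) f differentiable (at p)"
    using assms unfolding smooth_on_def by blast
  then show "foldr pd vs (pd v f) differentiable (at p)"
    by simp
qed

lemma smooth_on_imp_differentiable:
  "smooth_on S f \<Longrightarrow> p \<in> S \<Longrightarrow> f differentiable (at p)"
  unfolding smooth_on_def by (drule spec[of _ "[]"]) simp

lemma has_real_derivative_pd_along_line:
  fixes f :: "'a::real_normed_vector \<Rightarrow> real"
  assumes "f differentiable (at (a + t *\<^sub>R u))"
  shows "((\<lambda>t. f (a + t *\<^sub>R u)) has_real_derivative pd u f (a + t *\<^sub>R u)) (at t)"
proof -
  let ?D = "frechet_derivative f (at (a + t *\<^sub>R u))"
  have "((\<lambda>t. f (a + t *\<^sub>R u)) has_derivative (\<lambda>h. ?D (h *\<^sub>R u))) (at t)"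
    using assms unfolding frechet_derivative_works
    by (rule has_derivative_compose[of "\<lambda>t. a + t *\<^sub>R u", unfolded o_def, rotated])
      (auto intro!: derivative_eq_intros)
  moreover have "linear ?D"
    using assms by (rule linear_frechet_derivative)
  then have "(\<lambda>h. ?D (h *\<^sub>R u)) = (\<lambda>h. pd u f (a + t *\<^sub>R u) * h)"
    by (simp add: fun_eq_iff pd_def linear_scale mult.commute)
  ultimately show ?thesis
    by (simp add: has_field_derivative_def)
qed

definition second_diff :: "('a::real_normed_vector \<Rightarrow> real) \<Rightarrow> 'a \<Rightarrow> 'a \<Rightarrow> 'a \<Rightarrow> real \<Rightarrow> real" where
  "second_diff f p u v s = f (p + s *\<^sub>R u + s *\<^sub>R v) - f (p + s *\<^sub>R u) - f (p + s *\<^sub>R v) + f p"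

lemma second_diff_commute: "second_diff f p u v s = second_diff f p v u s"
  by (simp add: second_diff_def add_ac)

lemma second_diff_mean_value:
  fixes f :: "'a::real_normed_vector \<Rightarrow> real"
  assumes "0 < s"
    and diff: "\<And>t t'. t \<in> {0..s} \<Longrightarrow> t' \<in> {0..s} \<Longrightarrow>
      f differentiable (at (p + t *\<^sub>R u + t' *\<^sub>R v)) \<and> pd u f differentiable (at (p + t *\<^sub>R u + t' *\<^sub>R v))"
  shows "\<exists>\<xi>\<in>{0<..<s}. \<exists>\<eta>\<in>{0<..<s}. second_diff f p u v s = s\<^sup>2 * pd v (pd u f) (p + \<xi> *\<^sub>R u + \<eta> *\<^sub>R v)"
proof -
  define g where "g t = f (p + s *\<^sub>R v + t *\<^sub>R u) - f (p + t *\<^sub>R u)" for t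
  have g_deriv: "(g has_real_derivative pd u f (p + s *\<^sub>R v + t *\<^sub>R u) - pd u f (p + t *\<^sub>R u)) (at t)"
    if "0 \<le> t" "t \<le> s" for t
  proof -
    have "f differentiable (at (p + s *\<^sub>R v + t *\<^sub>R u))" "f differentiable (at (p + t *\<^sub>R u))"
      using diff[of t s] diff[of t 0] that \<open>0 < s\<close> by (simp_all add: add_ac)
    then show ?thesis
      unfolding g_def by (intro DERIV_diff has_real_derivative_pd_along_line)
  qed
  then obtain \<xi> where \<xi>: "0 < \<xi>" "\<xi> < s"
    and g: "g s - g 0 = s * (pd u f (p + s *\<^sub>R v + \<xi> *\<^sub>R u) - pd u f (p + \<xi> *\<^sub>R u))"
    using MVT2[OF \<open>0 < s\<close> g_deriv] by auto
  define h where "h t = pd u f (p + \<xi> *\<^sub>R u + t *\<^sub>R v)" for t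
  have h_deriv: "(h has_real_derivative pd v (pd u f) (p + \<xi> *\<^sub>R u + t *\<^sub>R v)) (at t)"
    if "0 \<le> t" "t \<le> s" for t
    unfolding h_def using diff[of \<xi> t] that \<xi>
    by (intro has_real_derivative_pd_along_line) auto
  then obtain \<eta> where \<eta>: "0 < \<eta>" "\<eta> < s"
    and h: "h s - h 0 = s * pd v (pd u f) (p + \<xi> *\<^sub>R u + \<eta> *\<^sub>R v)"
    using MVT2[OF \<open>0 < s\<close> h_deriv] by auto
  have "second_diff f p u v s = g s - g 0"
    by (simp add: second_diff_def g_def add_ac)
  also have "\<dots> = s * (h s - h 0)"
    using g by (simp add: h_def add_ac)
  also have "\<dots> = s\<^sup>2 * pd v (pd u f) (p + \<xi> *\<^sub>R u + \<eta> *\<^sub>R v)"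
    using h by (simp add: power2_eq_square)
  finally show ?thesis
    using \<xi> \<eta> by (meson greaterThanLessThan_iff)
qed

lemma norm_scaleR_add_le:
  fixes u v :: "'a::real_normed_vector"
  assumes "t \<in> {0..s}" "t' \<in> {0..s}"
  shows "norm (t *\<^sub>R u + t' *\<^sub>R v) \<le> s * (norm u + norm v)"
proof -
  have "norm (t *\<^sub>R u + t' *\<^sub>R v) \<le> t * norm u + t' * norm v"
    using assms norm_triangle_ineq[of "t *\<^sub>R u" "t' *\<^sub>R v"] by simp
  also have "\<dots> \<le> s * (norm u + norm v)"
    using assms by (simp add: distrib_left add_mono mult_right_mono)
  finally show ?thesis .
qed

lemma eventually_second_diff_mean_value:
  fixes f :: "'a::real_normed_vector \<Rightarrow> real"
  assumes "open S" "p \<in> S"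
    and diff: "\<And>x. x \<in> S \<Longrightarrow> f differentiable (at x)" "\<And>x. x \<in> S \<Longrightarrow> pd u f differentiable (at x)"
  shows "\<forall>\<^sub>F s in at_right 0. \<exists>y.
    second_diff f p u v s / s\<^sup>2 = pd v (pd u f) y \<and> norm (y - p) \<le> s * (norm u + norm v)"
proof -
  obtain r where "r > 0" and r: "ball p r \<subseteq> S"
    using assms(1,2) open_contains_ball by blast
  define C where "C = norm u + norm v + 1"
  have "C > 0"
    by (simp add: C_def add_nonneg_pos)
  show ?thesis
    using eventually_at_right_real[OF divide_pos_pos[OF \<open>r > 0\<close> \<open>C > 0\<close>]]
  proof (rule eventually_mono)
    fix s :: real
    assume s: "s \<in> {0<..<r / C}"
    have square_in_S: "p + t *\<^sub>R u + t' *\<^sub>R v \<in> S" if "t \<in> {0..s}" "t' \<in> {0..s}" for t t'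
    proof -
      have "norm (t *\<^sub>R u + t' *\<^sub>R v) < r"
        using norm_scaleR_add_le[OF that, of u v] s \<open>C > 0\<close>
        by (simp add: pos_less_divide_eq C_def distrib_left)
      then have "p + (t *\<^sub>R u + t' *\<^sub>R v) \<in> ball p r"
        by (simp add: dist_norm norm_minus_commute add.commute)
      then show ?thesis
        using r by (auto simp: add.assoc)
    qed
    have "\<exists>\<xi>\<in>{0<..<s}. \<exists>\<eta>\<in>{0<..<s}.
        second_diff f p u v s = s\<^sup>2 * pd v (pd u f) (p + \<xi> *\<^sub>R u + \<eta> *\<^sub>R v)"
      using s square_in_S diff by (intro second_diff_mean_value) auto
    then obtain \<xi> \<eta> where "\<xi> \<in> {0..s}" "\<eta> \<in> {0..s}"
      and eq: "second_diff f p u v s = s\<^sup>2 * pd v (pd u f) (p + \<xi> *\<^sub>R u + \<eta> *\<^sub>R v)"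
      by (meson greaterThanLessThan_iff atLeastAtMost_iff less_imp_le)
    then have "norm (p + \<xi> *\<^sub>R u + \<eta> *\<^sub>R v - p) \<le> s * (norm u + norm v)"
      using norm_scaleR_add_le[of \<xi> s \<eta> u v] by (simp add: add.assoc)
    then show "\<exists>y. second_diff f p u v s / s\<^sup>2 = pd v (pd u f) y \<and> norm (y - p) \<le> s * (norm u + norm v)"
      using s eq by (intro exI[of _ "p + \<xi> *\<^sub>R u + \<eta> *\<^sub>R v"]) simp
  qed
qed

lemma second_diff_tendsto:
  fixes f :: "'a::real_normed_vector \<Rightarrow> real"
  assumes "open S" "p \<in> S"
    and "\<And>x. x \<in> S \<Longrightarrow> f differentiable (at x)" "\<And>x. x \<in> S \<Longrightarrow> pd u f differentiable (at x)"
    and cont: "continuous (at p) (pd v (pd u f))"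
  shows "((\<lambda>s. second_diff f p u v s / s\<^sup>2) \<longlongrightarrow> pd v (pd u f) p) (at_right 0)"
proof -
  define P where "P s y \<longleftrightarrow>
    second_diff f p u v s / s\<^sup>2 = pd v (pd u f) y \<and> norm (y - p) \<le> s * (norm u + norm v)" for s y
  define y where "y s = (SOME y. P s y)" for s
  have "\<forall>\<^sub>F s in at_right 0. \<exists>y. P s y"
    unfolding P_def by (rule eventually_second_diff_mean_value[OF assms(1-4)])
  then have y: "\<forall>\<^sub>F s in at_right 0. P s (y s)"
    by (rule eventually_mono) (unfold y_def, rule someI_ex)
  have "\<forall>\<^sub>F s in at_right 0. norm (y s - p) \<le> s * (norm u + norm v)"
    using y by (rule eventually_mono) (simp add: P_def)
  moreover have "((\<lambda>s. s * (norm u + norm v)) \<longlongrightarrow> 0) (at_right 0)"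
    by (rule tendsto_mult_left_zero[OF tendsto_ident_at])
  ultimately have "(y \<longlongrightarrow> p) (at_right 0)"
    unfolding Lim_null[of y] by (rule Lim_null_comparison)
  then have "((\<lambda>s. pd v (pd u f) (y s)) \<longlongrightarrow> pd v (pd u f) p) (at_right 0)"
    by (rule isCont_tendsto_compose[OF cont])
  moreover have "\<forall>\<^sub>F s in at_right 0. pd v (pd u f) (y s) = second_diff f p u v s / s\<^sup>2"
    using y by (rule eventually_mono) (simp add: P_def)
  ultimately show ?thesis
    by (rule Lim_transform_eventually)
qed

lemma pd_pd_commute:
  fixes f :: "'a::real_normed_vector \<Rightarrow> real"
  assumes "open S" "p \<in> S"
    and "\<And>x. x \<in> S \<Longrightarrow> f differentiable (at x)"
    and "\<And>x. x \<in> S \<Longrightarrow> pd u f differentiable (at x)" "\<And>x. x \<in> S \<Longrightarrow> pd v f differentiable (at x)"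
    and "continuous (at p) (pd v (pd u f))" "continuous (at p) (pd u (pd v f))"
  shows "pd v (pd u f) p = pd u (pd v f) p"
proof -
  have "((\<lambda>s. second_diff f p u v s / s\<^sup>2) \<longlongrightarrow> pd v (pd u f) p) (at_right 0)"
    by (rule second_diff_tendsto) (use assms in auto)
  moreover have "((\<lambda>s. second_diff f p u v s / s\<^sup>2) \<longlongrightarrow> pd u (pd v f) p) (at_right 0)"
    unfolding second_diff_commute[of f p u v] by (rule second_diff_tendsto) (use assms in auto)
  ultimately show ?thesis
    by (rule tendsto_unique[OF trivial_limit_at_right_real])
qed

lemma smooth_on_pd_pd_commute:
  fixes f :: "'a::real_normed_vector \<Rightarrow> real"
  assumes "open S" "smooth_on S f" "p \<in> S"
  shows "pd v (pd u f) p = pd u (pd v f) p"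
  using assms
  by (intro pd_pd_commute[of S] differentiable_imp_continuous_within smooth_on_imp_differentiable[of S]
      smooth_on_pd) auto

lemma matrix_inv_left:
  fixes A :: "'a::semiring_1^'n^'m"
  assumes "invertible A"
  shows "matrix_inv A ** A = mat 1"
  using someI_ex[OF assms[unfolded invertible_def]] unfolding matrix_inv_def by blast

lemma uminus_vector_matrix_mult: "(- x) v* A = - (x v* (A :: 'a::ring_1^'n^'m))"
  by (simp add: vector_matrix_mult_def vec_eq_iff sum_negf)

lemma linear_apply_vertical:
  fixes D :: "('n::finite, 'm::finite) pt \<Rightarrow> 'b::real_vector"
  assumes "linear D"
  shows "D (0, c, w) = D (0, 0, w) + (\<Sum>l\<in>UNIV. c $ l *\<^sub>R D (dir_v l))"
proof -
  have "(\<Sum>l\<in>UNIV. c $ l *\<^sub>R dir_v l) = (0, (\<Sum>l\<in>UNIV. c $ l *\<^sub>R axis l 1), 0 :: real^'m)"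
    by (simp add: dir_v_def fst_sum snd_sum prod_eq_iff)
  also have "(\<Sum>l\<in>UNIV. c $ l *\<^sub>R axis l (1::real)) = c"
    using basis_expansion[of c] by (simp add: scalar_mult_eq_scaleR)
  finally have "(0, c, w) = (0, 0, w) + (\<Sum>l\<in>UNIV. c $ l *\<^sub>R dir_v l)"
    by simp
  then show ?thesis
    using assms by (simp add: linear_add linear_sum linear_scale)
qed

definition mixed_hessian :: "(('n::finite, 'm::finite) pt \<Rightarrow> real) \<Rightarrow> 'm \<Rightarrow> ('n, 'm) pt \<Rightarrow> real^'n" where
  "mixed_hessian L k p = (\<chi> i. pd (dir_v i) (pd (dir_z k) L) p)"

lemma reeb_eq: "reeb L k p = (0, - (mixed_hessian L k p v* matrix_inv (Wmat L p)), axis k 1)"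
  by (simp add: reeb_def mixed_hessian_def vector_matrix_mult_def vec_eq_iff mult.commute)

lemma reeb_annihilates_d_pd_dir_v:
  fixes L :: "('n::finite, 'm::finite) pt \<Rightarrow> real"
  assumes "open S" "smooth_on S L" "p \<in> S" "invertible (Wmat L p)"
  shows "frechet_derivative (pd (dir_v j) L) (at p) (reeb L k p) = 0"
proof -
  define D where "D = frechet_derivative (pd (dir_v j) L) (at p)"
  define W where "W = Wmat L p"
  define M where "M = mixed_hessian L k p"
  define c where "c = - (M v* matrix_inv W)"
  have "linear D"
    unfolding D_def using assms(2,3)
    by (intro linear_frechet_derivative smooth_on_imp_differentiable[of S] smooth_on_pd)
  have "D (reeb L k p) = D (dir_z k) + (\<Sum>l\<in>UNIV. c $ l * D (dir_v l))"
    using linear_apply_vertical[OF \<open>linear D\<close>, of c "axis k 1"]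
    by (simp add: reeb_eq c_def M_def W_def dir_z_def)
  also have "D (dir_z k) = pd (dir_z k) (pd (dir_v j) L) p"
    by (simp add: D_def pd_def)
  also have "\<dots> = pd (dir_v j) (pd (dir_z k) L) p"
    by (rule smooth_on_pd_pd_commute[OF assms(1-3)])
  also have "(\<Sum>l\<in>UNIV. c $ l * D (dir_v l)) = (c v* W) $ j"
    by (simp add: vector_matrix_mult_def W_def Wmat_def D_def pd_def)
  also have "c v* W = - M"
    using matrix_inv_left[OF assms(4)]
    by (simp add: c_def uminus_vector_matrix_mult vector_matrix_mul_assoc W_def)
  finally show ?thesis
    by (simp add: D_def M_def mixed_hessian_def)
qed

lemma lamL_vertical: "fst w = 0 \<Longrightarrow> lamL L i x w = snd (snd w) $ i"
  by (simp add: lamL_def)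

lemma lie_form_const_direction:
  assumes "\<And>x. \<alpha> x w = c"
  shows "lie_form X \<alpha> p w = \<alpha> p (frechet_derivative X (at p) w)"
  by (simp add: lie_form_def assms)

lemma has_derivative_vert_lift_L:
  assumes "(X has_derivative DX) (at p)" "\<And>j. pd (dir_v j) L differentiable (at p)"
  shows "(vert_lift_L X L has_derivative (\<lambda>w. \<Sum>j\<in>UNIV.
      fst (X p) $ j * frechet_derivative (pd (dir_v j) L) (at p) w + fst (DX w) $ j * pd (dir_v j) L p)) (at p)"
proof -
  have F: "((\<lambda>x. fst (X x) $ j) has_derivative (\<lambda>w. fst (DX w) $ j)) (at p)" for j
    using bounded_linear.has_derivative[OF bounded_linear_vec_nth has_derivative_fst[OF assms(1)]] .
  have dL: "(pd (dir_v j) L has_derivative frechet_derivative (pd (dir_v j) L) (at p)) (at p)" for j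
    using assms(2) frechet_derivative_works by blast
  show ?thesis
    unfolding vert_lift_L_def by (intro has_derivative_sum has_derivative_mult F dL)
qed

theorem theorem6:
  fixes V :: "(real^'n::finite) set"
    and L :: "('n, 'm::finite) pt \<Rightarrow> real"
    and X :: "('n, 'm) pt \<Rightarrow> ('n, 'm) pt"
    and f :: "'m \<Rightarrow> ('n, 'm) pt \<Rightarrow> real"
  assumes "open V"
    and "smooth_on (V \<times> UNIV \<times> UNIV) L"
    and "regular_on (V \<times> UNIV \<times> UNIV) L"
    and "smooth_on (V \<times> UNIV \<times> UNIV) X"
    and "\<And>i. smooth_on (V \<times> UNIV \<times> UNIV) (f i)"
    and "\<And>i p w. p \<in> V \<times> UNIV \<times> UNIV \<Longrightarrow> lie_form X (lamL L i) p w = dfun (f i) p w"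
  shows "\<forall>i k. \<forall>p \<in> V \<times> UNIV \<times> UNIV.
           dfun (\<lambda>x. f i x - snd (snd (X x)) $ i + vert_lift_L X L x) p (reeb L k p) = 0"
proof (intro allI ballI)
  fix i k and p :: "('n, 'm) pt"
  assume p: "p \<in> V \<times> UNIV \<times> UNIV"
  have "open (V \<times> (UNIV :: (real^'n) set) \<times> (UNIV :: (real^'m) set))"
    using assms(1) by (intro open_Times) auto
  note chart = this assms(2) p
  have regular: "invertible (Wmat L p)"
    using assms(3) p unfolding regular_on_def by blast
  define R where "R = reeb L k p"
  define DX where "DX = frechet_derivative X (at p)"
  define Df where "Df = frechet_derivative (f i) (at p)"
  have "(X has_derivative DX) (at p)" "(f i has_derivative Df) (at p)"
    using smooth_on_imp_differentiable[OF assms(4) p] smooth_on_imp_differentiable[OF assms(5) p]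
    unfolding DX_def Df_def frechet_derivative_works by auto
  then have "((\<lambda>x. f i x - snd (snd (X x)) $ i + vert_lift_L X L x) has_derivative
      (\<lambda>w. Df w - snd (snd (DX w)) $ i + (\<Sum>j\<in>UNIV. fst (X p) $ j *
        frechet_derivative (pd (dir_v j) L) (at p) w + fst (DX w) $ j * pd (dir_v j) L p))) (at p)"
    using chart
    by (intro has_derivative_add has_derivative_diff has_derivative_vert_lift_L
        bounded_linear.has_derivative[OF bounded_linear_vec_nth] has_derivative_snd
        smooth_on_imp_differentiable smooth_on_pd) auto
  then have "dfun (\<lambda>x. f i x - snd (snd (X x)) $ i + vert_lift_L X L x) p R
      = Df R - snd (snd (DX R)) $ i + (\<Sum>j\<in>UNIV. fst (DX R) $ j * pd (dir_v j) L p)"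
    using reeb_annihilates_d_pd_dir_v[OF chart regular]
    by (simp add: dfun_def frechet_derivative_at[symmetric] R_def)
  also have "Df R = lamL L i p (DX R)"
    using assms(6)[OF p, of i R] lie_form_const_direction[of "lamL L i" R]
    by (simp add: R_def reeb_def lamL_vertical DX_def Df_def dfun_def)
  finally show "dfun (\<lambda>x. f i x - snd (snd (X x)) $ i + vert_lift_L X L x) p (reeb L k p) = 0"
    by (simp add: R_def lamL_def mult.commute)
qed

end
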